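(* Let $3\leq m\leq n$, $\ell=m-1$, $p=(m-1)n$. Then $\mathfrak{M}\subset\mathfrak{S}$.
   Context: $E_n$ is the $n\times n$ identity. $\mathfrak{M}$ is the set of $Y=(Y_1;\ldots;Y_\ell)\in\mathbb{R}^{n\times n\times\ell}$ (slices $Y_k$ are $n\times n$ matrices) for which there exist a real $m\times p$ matrix $(x_{ij})$ and a real $n\times p$ matrix $A=(\mathbf{a}_1,\ldots,\mathbf{a}_p)$ such that $(x_{1j}Y_1+\cdots+x_{\ell j}Y_\ell-x_{mj}E_n)\mathbf{a}_j=\mathbf{0}$ for $1\leq j\leq p$ and $B=\begin{pmatrix}AD_1\\ \vdots\\ AD_\ell\end{pmatrix}$ is nonsingular, where $D_k=\operatorname{diag}(x_{k1},\ldots,x_{kp})$. For such $Y$, $V(Y)=\{\mathbf{a}\in\mathbb{R}^n\mid \sum_{k=1}^\ell x_kY_k\mathbf{a}=x_m\mathbf{a}\text{ for some }(x_1,\ldots,x_m)^\top\neq\mathbf{0}\}$, $\hat V(Y)$ is the linear span of $V(Y)$, and $\mathfrak{S}=\{Y\in\mathbb{R}^{n\times n\times\ell}\mid \dim\hat V(Y)=n\}$. *)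

theory Defs
  imports "Jordan_Normal_Form.DL_Rank"
begin

text \<open>A tensor Y in R^(n x n x l) is a list of l slices, each an n x n real matrix.
  Indices are 0-based: slice Y_k of the paper is Y ! (k-1); row k of the m x p matrix
  (x_ij) of the paper is row k-1 of X; x_m is row m-1.\<close>

definition slice_comb :: "nat \<Rightarrow> real mat list \<Rightarrow> (nat \<Rightarrow> real) \<Rightarrow> real mat" where
  "slice_comb n Y c = mat n n (\<lambda>(i, i'). \<Sum>k<length Y. c k * (Y ! k) $$ (i, i'))"

text \<open>The block matrix B = (A D_1; ...; A D_l): row k*n+i (k<l, i<n), column j is A_ij * x_(k+1) j.\<close>
definition block_B :: "nat \<Rightarrow> nat \<Rightarrow> nat \<Rightarrow> real mat \<Rightarrow> real mat \<Rightarrow> real mat" where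
  "block_B n l p X A = mat (l * n) p (\<lambda>(r, j). A $$ (r mod n, j) * X $$ (r div n, j))"

definition in_frakM :: "nat \<Rightarrow> nat \<Rightarrow> nat \<Rightarrow> real mat list \<Rightarrow> bool" where
  "in_frakM n m p Y \<longleftrightarrow>
     (\<forall>k<length Y. Y ! k \<in> carrier_mat n n) \<and>
     (\<exists>X A. X \<in> carrier_mat m p \<and> A \<in> carrier_mat n p \<and>
        (\<forall>j<p. (slice_comb n Y (\<lambda>k. X $$ (k, j)) - X $$ (m - 1, j) \<cdot>\<^sub>m 1\<^sub>m n) *\<^sub>v col A j = 0\<^sub>v n) \<and>
        invertible_mat (block_B n (length Y) p X A))"

definition V_set :: "nat \<Rightarrow> nat \<Rightarrow> real mat list \<Rightarrow> real vec set" where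
  "V_set n m Y = {a \<in> carrier_vec n. \<exists>c :: nat \<Rightarrow> real. (\<exists>k<m. c k \<noteq> 0) \<and>
       slice_comb n Y c *\<^sub>v a = c (m - 1) \<cdot>\<^sub>v a}"

definition dim_hatV :: "nat \<Rightarrow> nat \<Rightarrow> real mat list \<Rightarrow> nat" where
  "dim_hatV n m Y = vectorspace.dim class_ring
     ((module_vec TYPE(real) n)\<lparr>carrier := LinearCombinations.module.span class_ring (module_vec TYPE(real) n) (V_set n m Y)\<rparr>)"

definition in_frakS :: "nat \<Rightarrow> nat \<Rightarrow> real mat list \<Rightarrow> bool" where
  "in_frakS n m Y \<longleftrightarrow> (\<forall>k<length Y. Y ! k \<in> carrier_mat n n) \<and> dim_hatV n m Y = n"

end

theory Submission imports Defs begin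

(* Let (X, A) witness Y \<in> \<frM>, with p = l n and l = m - 1, so that the block
   matrix B = (A D_1; ...; A D_l) is a square invertible p \<times> p matrix.
   (1) No column of an invertible matrix vanishes.  Column j of B is zero as soon as
       x_1j = ... = x_lj = 0, so every column of X has a nonzero entry among its first
       l = m - 1 rows; together with the eigen-type equation this puts every column a_j of A into V(Y).
   (2) An invertible matrix is surjective.  Solving B w = (v; 0; ...; 0) and reading off the
       first block row gives A (D_1 w) = v, so A : R^p \<rightarrow> R^n is onto.
   Hence the columns of A, which lie in V(Y), span R^n, so dim \<hat>V(Y) = n. *)

lemma invertible_matE:
  fixes B :: "'a :: semiring_1 mat"
  assumes "invertible_mat B" and B: "B \<in> carrier_mat p p"
  obtains C where "C \<in> carrier_mat p p" "B * C = 1\<^sub>m p" "C * B = 1\<^sub>m p"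
proof -
  from assms obtain C where BC: "B * C = 1\<^sub>m p" and CB: "C * B = 1\<^sub>m (dim_row C)"
    unfolding invertible_mat_def inverts_mat_def by auto
  have "dim_col C = p" using BC B by (metis index_mult_mat(3) index_one_mat(3))
  moreover have "dim_row C = p" using CB B by (metis index_mult_mat(3) index_one_mat(3) carrier_matD(2))
  ultimately show thesis using that BC CB by auto
qed

lemma invertible_mat_col_nonzero:
  fixes B :: "'a :: comm_ring_1 mat"
  assumes "invertible_mat B" and B: "B \<in> carrier_mat p p" and j: "j < p"
  shows "col B j \<noteq> 0\<^sub>v p"
proof
  assume zero: "col B j = 0\<^sub>v p"
  obtain C where C: "C \<in> carrier_mat p p" and CB: "C * B = 1\<^sub>m p"
    using invertible_matE[OF assms(1) B] by metis
  have "1 = (C * B) $$ (j, j)" using CB j by simp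
  also have "\<dots> = row C j \<bullet> col B j" using B C j by simp
  also have "\<dots> = 0" using zero C j by (simp add: scalar_prod_right_zero[of _ p])
  finally show False by simp
qed

lemma invertible_mat_surj:
  fixes B :: "'a :: semiring_1 mat"
  assumes "invertible_mat B" and B: "B \<in> carrier_mat p p" and e: "e \<in> carrier_vec p"
  shows "\<exists>w \<in> carrier_vec p. B *\<^sub>v w = e"
proof -
  obtain C where C: "C \<in> carrier_mat p p" and BC: "B * C = 1\<^sub>m p"
    using invertible_matE[OF assms(1) B] by metis
  have "B *\<^sub>v (C *\<^sub>v e) = (B * C) *\<^sub>v e" using assoc_mult_mat_vec[OF B C e] by simp
  with BC e C show ?thesis by (intro bexI[of _ "C *\<^sub>v e"]) auto
qed

lemma block_B_col_zero:
  fixes A X :: "real mat"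
  assumes j: "j < p" and X0: "\<forall>k<l. X $$ (k, j) = 0"
  shows "col (block_B n l p X A) j = 0\<^sub>v (l * n)"
proof (rule eq_vecI)
  fix r assume "r < dim_vec (0\<^sub>v (l * n) :: real vec)"
  hence "r < l * n" by simp
  hence "r div n < l" by (simp add: less_mult_imp_div_less)
  thus "col (block_B n l p X A) j $ r = 0\<^sub>v (l * n) $ r"
    using \<open>r < l * n\<close> j X0 unfolding block_B_def by simp
qed (simp add: block_B_def)

lemma block_B_first_block:
  fixes A X :: "real mat"
  assumes A: "A \<in> carrier_mat n p" and l: "0 < l" and i: "i < n" and w: "w \<in> carrier_vec p"
  shows "(block_B n l p X A *\<^sub>v w) $ i = (A *\<^sub>v vec p (\<lambda>j. X $$ (0, j) * w $ j)) $ i"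
proof -
  have "n \<le> l * n" using l by simp
  hence il: "i < l * n" using i by linarith
  have "row (block_B n l p X A) i = vec p (\<lambda>j. A $$ (i, j) * X $$ (0, j))"
    using il i by (auto simp: block_B_def)
  hence "(block_B n l p X A *\<^sub>v w) $ i = (\<Sum>j<p. A $$ (i, j) * X $$ (0, j) * w $ j)"
    using il w by (simp add: block_B_def scalar_prod_def lessThan_atLeast0)
  also have "\<dots> = (A *\<^sub>v vec p (\<lambda>j. X $$ (0, j) * w $ j)) $ i"
    using A i by (simp add: scalar_prod_def lessThan_atLeast0 mult.assoc)
  finally show ?thesis .
qed

lemma block_B_invertible_col_X:
  fixes A X :: "real mat"
  assumes "invertible_mat (block_B n l p X A)" and p: "p = l * n" and j: "j < p"
  shows "\<exists>k<l. X $$ (k, j) \<noteq> 0"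
proof (rule ccontr)
  assume "\<not> ?thesis"
  hence "col (block_B n l p X A) j = 0\<^sub>v p" using block_B_col_zero[OF j] p by auto
  moreover have "block_B n l p X A \<in> carrier_mat p p" using p by (simp add: block_B_def)
  ultimately show False using invertible_mat_col_nonzero[OF assms(1) _ j] by blast
qed

lemma block_B_invertible_surj:
  fixes A X :: "real mat"
  assumes "invertible_mat (block_B n l p X A)" and p: "p = l * n" and l: "0 < l"
    and A: "A \<in> carrier_mat n p" and v: "v \<in> carrier_vec n"
  shows "\<exists>u \<in> carrier_vec p. A *\<^sub>v u = v"
proof -
  define e where "e = vec p (\<lambda>r. if r < n then v $ r else 0)"
  have "block_B n l p X A \<in> carrier_mat p p" using p by (simp add: block_B_def)
  moreover have "e \<in> carrier_vec p" by (simp add: e_def)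
  ultimately obtain w where w: "w \<in> carrier_vec p" and Bw: "block_B n l p X A *\<^sub>v w = e"
    using invertible_mat_surj[OF assms(1)] by blast
  define u where "u = vec p (\<lambda>j. X $$ (0, j) * w $ j)"
  have "A *\<^sub>v u = v"
  proof (rule eq_vecI)
    fix i assume "i < dim_vec v"
    hence i: "i < n" using v by simp
    have "n \<le> p" using l p by simp
    hence "i < p" using i by linarith
    hence "(A *\<^sub>v u) $ i = e $ i"
      using block_B_first_block[OF A l i w, where X = X] Bw unfolding u_def by simp
    thus "(A *\<^sub>v u) $ i = v $ i" using i \<open>i < p\<close> unfolding e_def by simp
  qed (use A v in auto)
  thus ?thesis unfolding u_def by auto
qed

lemma mat_minus_scalar_eq_zero:
  fixes S :: "'a :: comm_ring_1 mat"
  assumes S: "S \<in> carrier_mat n n" and a: "a \<in> carrier_vec n"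
    and h: "(S - x \<cdot>\<^sub>m 1\<^sub>m n) *\<^sub>v a = 0\<^sub>v n"
  shows "S *\<^sub>v a = x \<cdot>\<^sub>v a"
proof (rule eq_vecI)
  fix i assume "i < dim_vec (x \<cdot>\<^sub>v a)"
  hence i: "i < n" using a by simp
  have "(S - x \<cdot>\<^sub>m 1\<^sub>m n) *\<^sub>v a = S *\<^sub>v a - (x \<cdot>\<^sub>m 1\<^sub>m n) *\<^sub>v a"
    using minus_mult_distrib_mat_vec[OF S _ a] by simp
  also have "(x \<cdot>\<^sub>m 1\<^sub>m n) *\<^sub>v a = x \<cdot>\<^sub>v a"
    using a by (intro eq_vecI) (auto simp: smult_scalar_prod_distrib)
  finally have "S *\<^sub>v a - x \<cdot>\<^sub>v a = 0\<^sub>v n" using h by metis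
  hence "(S *\<^sub>v a - x \<cdot>\<^sub>v a) $ i = 0" using i by simp
  thus "(S *\<^sub>v a) $ i = (x \<cdot>\<^sub>v a) $ i" using i S a by simp
qed (use S a in auto)

lemma V_setI:
  assumes a: "a \<in> carrier_vec n" and c: "\<exists>k<m. c k \<noteq> 0"
    and h: "(slice_comb n Y c - c (m - 1) \<cdot>\<^sub>m 1\<^sub>m n) *\<^sub>v a = 0\<^sub>v n"
  shows "a \<in> V_set n m Y"
proof -
  have "slice_comb n Y c \<in> carrier_mat n n" by (simp add: slice_comb_def)
  from mat_minus_scalar_eq_zero[OF this a h] show ?thesis
    using a c unfolding V_set_def by blast
qed

context fixes n :: nat begin
interpretation vs: vec_space "TYPE('a :: field)" n .

lemma span_full_if_surj:
  assumes A: "A \<in> carrier_mat n p" and cols: "\<forall>j<p. col A j \<in> W" and W: "W \<subseteq> carrier_vec n"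
    and surj: "\<forall>v \<in> carrier_vec n. \<exists>u \<in> carrier_vec p. A *\<^sub>v u = v"
  shows "vs.span W = carrier_vec n"
proof -
  have "set (cols A) \<subseteq> W" using cols A by (auto simp: cols_def)
  hence "vs.col_space A \<subseteq> vs.span W" unfolding vs.col_space_def by (rule vs.span_is_monotone)
  moreover have "vs.col_space A = {y \<in> carrier_vec n. \<exists>u \<in> carrier_vec p. A *\<^sub>v u = y}"
    using vs.col_space_eq[OF A] A by simp
  hence "carrier_vec n \<subseteq> vs.col_space A" using surj by blast
  moreover have "vs.span W \<subseteq> carrier_vec n" using vs.span_is_subset2[OF W] by simp
  ultimately show ?thesis by blast
qed

lemma dim_span_full:
  assumes "vs.span V = carrier_vec n"
  shows "vectorspace.dim class_ring ((module_vec TYPE('a :: field) n)\<lparr>carrier := vs.span V\<rparr>) = n"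
  using assms vs.dim_is_n by (simp add: module_vec_def)

end

theorem mainTheorem5:
  fixes n m l p :: nat and Y :: "real mat list"
  assumes "3 \<le> m" and "m \<le> n" and "l = m - 1" and "p = (m - 1) * n"
    and "length Y = l"
    and "in_frakM n m p Y"
  shows "in_frakS n m Y"
proof -
  from assms(6) obtain X A where slices: "\<forall>k<length Y. Y ! k \<in> carrier_mat n n"
    and A: "A \<in> carrier_mat n p"
    and eq: "\<forall>j<p. (slice_comb n Y (\<lambda>k. X $$ (k, j)) - X $$ (m - 1, j) \<cdot>\<^sub>m 1\<^sub>m n) *\<^sub>v col A j = 0\<^sub>v n"
    and inv: "invertible_mat (block_B n l p X A)"
    unfolding in_frakM_def assms(5) by blast
  have p: "p = l * n" and l: "0 < l" and lm: "l < m" using assms(1-4) by auto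
  have cols: "\<forall>j<p. col A j \<in> V_set n m Y"
  proof (intro allI impI)
    fix j assume j: "j < p"
    have "\<exists>k<m. X $$ (k, j) \<noteq> 0"
      using block_B_invertible_col_X[OF inv p j] lm by (meson less_trans)
    moreover have "col A j \<in> carrier_vec n" using A j by simp
    ultimately show "col A j \<in> V_set n m Y"
      using V_setI[of "col A j" n m "\<lambda>k. X $$ (k, j)"] eq j by blast
  qed
  have "\<forall>v \<in> carrier_vec n. \<exists>u \<in> carrier_vec p. A *\<^sub>v u = v"
    using block_B_invertible_surj[OF inv p l A] by blast
  moreover have "V_set n m Y \<subseteq> carrier_vec n" by (auto simp: V_set_def)
  ultimately have "LinearCombinations.module.span class_ring (module_vec TYPE(real) n) (V_set n m Y)
      = carrier_vec n"
    using span_full_if_surj[OF A cols] by blast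
  from dim_span_full[OF this] show ?thesis
    using slices unfolding in_frakS_def dim_hatV_def by simp
qed

end
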